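(* Let $0<d<2$, $t\in[0,1]$ and $\ell\ge0$. Let $\rho^{(0)}_{d,t}$ be the atom at the origin of $\mathbb{R}^2$ and $\rho^{(\ell)}_{d,t}=\mathrm{LL}^{\otimes}_{d,t}(\rho^{(\ell-1)}_{d,t})$. Define $$\vec\mu^{(2\ell)}=\Big(\mu_{\vec T_1^{(2\ell)}}(\sigma_o=1),\ \mu_{\vec T_2^{(2\ell)}}(\sigma_o=1)\Big)\in(0,1)^2.$$ Then $\vec\mu^{(2\ell)}$ has distribution $\psi(\rho^{(\ell)}_{d,t})$, the pushforward of $\rho^{(\ell)}_{d,t}$ under $$\psi(z_1,z_2)=\big((1+\tanh(z_1/2))/2,\ (1+\tanh(z_2/2))/2\big).$$
   Context: **Operator.** For a probability measure $\rho$ on $\mathbb{R}^2$, $\mathrm{LL}^{\otimes}_{d,t}(\rho)$ is defined as follows. Let $\xi_i,\xi'_i,\xi''_i$ ($i\ge1$) have distribution $\rho$, with coordinates $\xi_{i,1},\xi_{i,2}$ and similarly for $\xi'_i,\xi''_i$. Let $D\sim\mathrm{Po}(td)$, $D',D''\sim\mathrm{Po}((1-t)d)$, and let $s_i,s'_i,s''_i,r_i,r'_i,r''_i$ be uniform on $\{\pm1\}$, all independent. Then $\mathrm{LL}^{\otimes}_{d,t}(\rho)$ is the law of the vector with first coordinate $$\sum_{i\le D}s_i\log\tfrac{1+r_i\tanh(\xi_{i,1}/2)}2+\sum_{i\le D'}s'_i\log\tfrac{1+r'_i\tanh(\xi'_{i,1}/2)}2$$ and second coordinate $$\sum_{i\le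 D}s_i\log\tfrac{1+r_i\tanh(\xi_{i,2}/2)}2+\sum_{i\le D''}s''_i\log\tfrac{1+r''_i\tanh(\xi''_{i,2}/2)}2.$$ **Tree.** The multitype Galton–Watson tree $\vec T^\otimes$ has variable nodes of types shared, 1-distinct and 2-distinct, and clause nodes of types $(s,s')$-shared, $(s,s')$ 1-distinct and $(s,s')$ 2-distinct for $s,s'\in\{\pm1\}$. The root $o$ is a shared variable. Offspring rules (all independent): - A shared variable has, for each $(s,s')$, $\mathrm{Po}(dt/4)$ shared, $\mathrm{Po}(d(1-t)/4)$ 1-distinct and $\mathrm{Po}(d(1-t)/4)$ 2-distinct clause children of type $(s,s')$. - An $h$-distinct variable has, for each $(s,s')$, $\mathrm{Po}(d/4)$ $h$-distinct clause children of type $(s,s')$. - A shared clause has one shared variable child. - An $h$-distinct clause has one $h$-distinct variable child. The tree is read as a 2-CNF: a clause node of type $(s,s')$ contains its parent variable with sign $s$ and its child variable with sign $s'$. $\vec T_h$ is obtained from $\vec T^\otimes$ by deleting all $(3-h)$-distinct nodes. $\vec T_h^{(2\ell)}$ deletes from $\vec T_h$ all nodes at distance more than $2\ell$ from $o$. For a satisfiable 2-CNF $\Psi$, $\mu_\Psi$ denotes the uniform distribution on satisfying assignments $\sigma\in\{\pm1\}^{\text{variables}}$. *)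

theory Defs
  imports "HOL-Probability.Probability"
begin

definition Po :: "real \<Rightarrow> nat pmf" where
  "Po r = (if r > 0 then poisson_pmf r else return_pmf 0)"

definition sign_pmf :: "real pmf" where
  "sign_pmf = pmf_of_set {1, -1}"

definition LLterm :: "real \<Rightarrow> real \<Rightarrow> real \<Rightarrow> real" where
  "LLterm s r x = s * ln ((1 + r * tanh (x / 2)) / 2)"

definition LLunit :: "(real \<times> real) pmf \<Rightarrow> (real \<times> real) pmf" where
  "LLunit \<rho> = do { \<xi> \<leftarrow> \<rho>; s \<leftarrow> sign_pmf; r \<leftarrow> sign_pmf;
                    return_pmf (LLterm s r (fst \<xi>), LLterm s r (snd \<xi>)) }"

definition LL :: "real \<Rightarrow> real \<Rightarrow> (real \<times> real) pmf \<Rightarrow> (real \<times> real) pmf" where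
  "LL d t \<rho> = do {
     D \<leftarrow> Po (t * d); D' \<leftarrow> Po ((1 - t) * d); D'' \<leftarrow> Po ((1 - t) * d);
     A \<leftarrow> replicate_pmf D (LLunit \<rho>);
     B \<leftarrow> replicate_pmf D' (LLunit \<rho>);
     C \<leftarrow> replicate_pmf D'' (LLunit \<rho>);
     return_pmf (sum_list (map fst A) + sum_list (map fst B),
                 sum_list (map snd A) + sum_list (map snd C)) }"

primrec rho :: "real \<Rightarrow> real \<Rightarrow> nat \<Rightarrow> (real \<times> real) pmf" where
  "rho d t 0 = return_pmf (0, 0)"
| "rho d t (Suc l) = LL d t (rho d t l)"

definition psi :: "real \<times> real \<Rightarrow> real \<times> real" where
  "psi z = ((1 + tanh (fst z / 2)) / 2, (1 + tanh (snd z / 2)) / 2)"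

datatype ntype = Shared | Dist1 | Dist2

text \<open>A variable node with its list of clause children; each clause child is
  (type of the clause, sign s of the parent variable, sign s' of the child variable,
  subtree of the child variable).  Signs: True = +1, False = -1.  The type of a
  variable node equals the type of its parent clause; the root is shared.\<close>
datatype mtree = MNode "(ntype \<times> bool \<times> bool \<times> mtree) list"

fun concat_pmfs :: "'a list pmf list \<Rightarrow> 'a list pmf" where
  "concat_pmfs [] = return_pmf []"
| "concat_pmfs (p # ps) = do { x \<leftarrow> p; y \<leftarrow> concat_pmfs ps; return_pmf (x @ y) }"

definition child_group :: "real \<Rightarrow> ntype \<Rightarrow> bool \<Rightarrow> bool \<Rightarrow> mtree pmf
    \<Rightarrow> (ntype \<times> bool \<times> bool \<times> mtree) list pmf" where
  "child_group lam k s s' p = do { N \<leftarrow> Po lam; cs \<leftarrow> replicate_pmf N p;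
                                  return_pmf (map (\<lambda>c. (k, s, s', c)) cs) }"

definition signs :: "(bool \<times> bool) list" where
  "signs = [(True, True), (True, False), (False, True), (False, False)]"

text \<open>offspring types and Poisson rates (per sign pair (s,s')) of a variable of type k\<close>
fun offspring :: "real \<Rightarrow> real \<Rightarrow> ntype \<Rightarrow> (ntype \<times> real) list" where
  "offspring d t Shared = [(Shared, d * t / 4), (Dist1, d * (1 - t) / 4), (Dist2, d * (1 - t) / 4)]"
| "offspring d t Dist1 = [(Dist1, d / 4)]"
| "offspring d t Dist2 = [(Dist2, d / 4)]"

text \<open>gen d t l k: law of the subtree rooted at a variable of type k, truncated so that
  only l further variable generations (2l further levels) are kept.\<close>
primrec gen :: "real \<Rightarrow> real \<Rightarrow> nat \<Rightarrow> ntype \<Rightarrow> mtree pmf" where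
  "gen d t 0 k = return_pmf (MNode [])"
| "gen d t (Suc l) k = map_pmf MNode
     (concat_pmfs [child_group lam k' s s' (gen d t l k'). (k', lam) \<leftarrow> offspring d t k, (s, s') \<leftarrow> signs])"

definition Ttensor :: "real \<Rightarrow> real \<Rightarrow> nat \<Rightarrow> mtree pmf" where
  "Ttensor d t l = gen d t l Shared"

fun keep :: "nat \<Rightarrow> ntype \<Rightarrow> bool" where
  "keep h Shared = True"
| "keep h Dist1 = (h = 1)"
| "keep h Dist2 = (h = 2)"

text \<open>T_h: delete all (3-h)-distinct nodes\<close>
fun restrict :: "nat \<Rightarrow> mtree \<Rightarrow> mtree" where
  "restrict h (MNode cs) =
     MNode (map (\<lambda>(k, s, s', c). (k, s, s', restrict h c)) (filter (\<lambda>x. keep h (fst x)) cs))"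

text \<open>variables are addressed by their paths (lists of child indices) from the root\<close>
inductive is_var :: "mtree \<Rightarrow> nat list \<Rightarrow> bool" where
  "is_var (MNode cs) []"
| "i < length cs \<Longrightarrow> cs ! i = (k, a, b, c) \<Longrightarrow> is_var c p \<Longrightarrow> is_var (MNode cs) (i # p)"

text \<open>clause t p i s s': the clause between the variable at path p (sign s) and its
  i-th child variable at path p @ [i] (sign s')\<close>
inductive clause :: "mtree \<Rightarrow> nat list \<Rightarrow> nat \<Rightarrow> bool \<Rightarrow> bool \<Rightarrow> bool" where
  "i < length cs \<Longrightarrow> cs ! i = (k, s, s', c) \<Longrightarrow> clause (MNode cs) [] i s s'"
| "i < length cs \<Longrightarrow> cs ! i = (k, a, b, c) \<Longrightarrow> clause c p j s s' \<Longrightarrow>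
     clause (MNode cs) (i # p) j s s'"

definition satisfies :: "mtree \<Rightarrow> (nat list \<Rightarrow> bool) \<Rightarrow> bool" where
  "satisfies T \<sigma> \<longleftrightarrow> (\<forall>p i s s'. clause T p i s s' \<longrightarrow> (\<sigma> p = s \<or> \<sigma> (p @ [i]) = s'))"

definition SAT :: "mtree \<Rightarrow> (nat list \<Rightarrow> bool) set" where
  "SAT T = {\<sigma> \<in> {p. is_var T p} \<rightarrow>\<^sub>E (UNIV :: bool set). satisfies T \<sigma>}"

definition mu_root :: "mtree \<Rightarrow> real" where
  "mu_root T = real (card {\<sigma> \<in> SAT T. \<sigma> [] = True}) / real (card (SAT T))"

definition vec_mu :: "real \<Rightarrow> real \<Rightarrow> nat \<Rightarrow> (real \<times> real) pmf" where
  "vec_mu d t l = map_pmf (\<lambda>T. (mu_root (restrict 1 T), mu_root (restrict 2 T))) (Ttensor d t l)"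

end

theory Submission
  imports Defs
begin

(* For a finite tree the satisfying assignments with a fixed root value factorise over the
   children, so the log-odds of the root marginal obeys a belief-propagation recursion whose
   clause terms are exactly the summands LLterm s r y of the operator LL.  In the truncated
   Galton-Watson tree the children of each type and sign pair form independent Poisson families,
   so the pair of root log-odds of the two restricted trees is a sum of independent compound
   Poisson variables.  Poisson superposition merges the four sign classes into one family with
   uniform signs and the shared / 1-distinct / 2-distinct classes into the three Poisson sums of
   LL; a distinct subtree only contributes to one coordinate, whose law is the corresponding
   marginal of rho. *)

section \<open>Sums of independent variables and compound Poisson laws\<close>

definition conv_pmf :: "'a::comm_monoid_add pmf \<Rightarrow> 'a pmf \<Rightarrow> 'a pmf" where
  "conv_pmf p q = bind_pmf p (\<lambda>x. map_pmf (\<lambda>y. x + y) q)"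

lemma conv_pmf_return_zero [simp]:
  "conv_pmf p (return_pmf 0) = p" "conv_pmf (return_pmf 0) p = p"
  by (simp_all add: conv_pmf_def map_pmf_def bind_return_pmf bind_return_pmf')

lemma conv_pmf_commute: "conv_pmf p q = conv_pmf q p"
  unfolding conv_pmf_def map_pmf_def by (subst bind_commute_pmf) (simp add: add.commute)

lemma conv_pmf_assoc: "conv_pmf (conv_pmf p q) r = conv_pmf p (conv_pmf q r)"
  unfolding conv_pmf_def map_pmf_def by (simp add: bind_assoc_pmf bind_return_pmf add.assoc)

lemma conv_pmf_left_commute: "conv_pmf p (conv_pmf q r) = conv_pmf q (conv_pmf p r)"
  by (metis conv_pmf_assoc conv_pmf_commute)

lemma conv_pmf_bind_left: "conv_pmf (bind_pmf M f) q = bind_pmf M (\<lambda>x. conv_pmf (f x) q)"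
  unfolding conv_pmf_def by (simp add: bind_assoc_pmf)

lemma conv_pmf_bind_right: "conv_pmf p (bind_pmf M g) = bind_pmf M (\<lambda>x. conv_pmf p (g x))"
  unfolding conv_pmf_def map_bind_pmf by (subst bind_commute_pmf) simp

lemma conv_pmf_map_pmf:
  "conv_pmf (map_pmf f p) (map_pmf g q) = bind_pmf p (\<lambda>x. map_pmf (\<lambda>y. f x + g y) q)"
  by (simp add: conv_pmf_def bind_map_pmf map_pmf_comp)

lemma map_conv_pmf:
  assumes "Modules.additive f"
  shows "map_pmf f (conv_pmf p q) = conv_pmf (map_pmf f p) (map_pmf f q)"
  using Modules.additive.add[OF assms] by (simp add: conv_pmf_def map_bind_pmf bind_map_pmf map_pmf_comp)

definition sum_iid_pmf :: "nat \<Rightarrow> 'a::comm_monoid_add pmf \<Rightarrow> 'a pmf" where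
  "sum_iid_pmf n p = map_pmf sum_list (replicate_pmf n p)"

lemma sum_iid_pmf_0 [simp]: "sum_iid_pmf 0 p = return_pmf 0"
  by (simp add: sum_iid_pmf_def)

lemma sum_iid_pmf_Suc: "sum_iid_pmf (Suc n) p = conv_pmf p (sum_iid_pmf n p)"
  by (simp add: sum_iid_pmf_def conv_pmf_def map_bind_pmf map_pmf_def bind_assoc_pmf bind_return_pmf)

lemma sum_iid_pmf_return_zero [simp]: "sum_iid_pmf n (return_pmf 0) = return_pmf 0"
  by (induction n) (simp_all add: sum_iid_pmf_Suc)

lemma map_sum_iid_pmf:
  assumes "Modules.additive f"
  shows "map_pmf f (sum_iid_pmf n p) = sum_iid_pmf n (map_pmf f p)"
  by (induction n) (simp_all add: sum_iid_pmf_Suc map_conv_pmf[OF assms] Modules.additive.zero[OF assms])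

lemma map_sum_list_replicate_pmf:
  "map_pmf (\<lambda>xs. sum_list (map g xs)) (replicate_pmf n p) = sum_iid_pmf n (map_pmf g p)"
proof (induction n)
  case (Suc n)
  have "map_pmf (\<lambda>xs. sum_list (map g xs)) (replicate_pmf (Suc n) p) =
      bind_pmf p (\<lambda>x. map_pmf (\<lambda>ys. g x + sum_list (map g ys)) (replicate_pmf n p))"
    by (simp add: map_bind_pmf map_pmf_comp flip: map_pmf_def)
  also have "\<dots> = conv_pmf (map_pmf g p) (map_pmf (\<lambda>xs. sum_list (map g xs)) (replicate_pmf n p))"
    by (simp add: conv_pmf_map_pmf)
  finally show ?case
    by (simp add: Suc sum_iid_pmf_Suc)
qed (simp add: sum_iid_pmf_def)

definition compound_poisson_pmf :: "real \<Rightarrow> 'a::comm_monoid_add pmf \<Rightarrow> 'a pmf" where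
  "compound_poisson_pmf lam p = bind_pmf (Po lam) (\<lambda>N. sum_iid_pmf N p)"

lemma compound_poisson_pmf_nonpos: "lam \<le> 0 \<Longrightarrow> compound_poisson_pmf lam p = return_pmf 0"
  by (simp add: compound_poisson_pmf_def Po_def bind_return_pmf)

lemma compound_poisson_pmf_return_zero [simp]: "compound_poisson_pmf lam (return_pmf 0) = return_pmf 0"
  by (simp add: compound_poisson_pmf_def)

lemma map_compound_poisson_pmf:
  "Modules.additive f \<Longrightarrow>
     map_pmf f (compound_poisson_pmf lam p) = compound_poisson_pmf lam (map_pmf f p)"
  by (simp add: compound_poisson_pmf_def map_bind_pmf map_sum_iid_pmf)

definition mix_pmf :: "real \<Rightarrow> 'a pmf \<Rightarrow> 'a pmf \<Rightarrow> 'a pmf" where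
  "mix_pmf w p q = bind_pmf (bernoulli_pmf w) (\<lambda>b. if b then p else q)"

lemma mix_pmf_same [simp]: "mix_pmf w p p = p"
  by (simp add: mix_pmf_def)

lemma mix_pmf_0 [simp]: "mix_pmf 0 p q = q"
proof -
  have "bernoulli_pmf 0 = return_pmf False"
  proof (rule pmf_eqI)
    fix x show "pmf (bernoulli_pmf 0) x = pmf (return_pmf False) x"
      by (cases x) simp_all
  qed
  then show ?thesis
    by (simp add: mix_pmf_def bind_return_pmf)
qed

lemma mix_pmf_1 [simp]: "mix_pmf 1 p q = p"
proof -
  have "bernoulli_pmf 1 = return_pmf True"
  proof (rule pmf_eqI)
    fix x show "pmf (bernoulli_pmf 1) x = pmf (return_pmf True) x"
      by (cases x) simp_all
  qed
  then show ?thesis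
    by (simp add: mix_pmf_def bind_return_pmf)
qed

lemma sum_iid_pmf_mix_pmf:
  assumes "0 \<le> w" "w \<le> 1"
  shows "sum_iid_pmf N (mix_pmf w p q) =
    bind_pmf (binomial_pmf N w) (\<lambda>j. conv_pmf (sum_iid_pmf j p) (sum_iid_pmf (N - j) q))"
proof (induction N)
  case 0
  show ?case using assms by (simp add: binomial_pmf_0 bind_return_pmf)
next
  case (Suc N)
  have "sum_iid_pmf (Suc N) (mix_pmf w p q) = conv_pmf (mix_pmf w p q)
      (bind_pmf (binomial_pmf N w) (\<lambda>j. conv_pmf (sum_iid_pmf j p) (sum_iid_pmf (N - j) q)))"
    by (simp only: sum_iid_pmf_Suc Suc)
  also have "\<dots> = bind_pmf (bernoulli_pmf w) (\<lambda>b. bind_pmf (binomial_pmf N w)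
        (\<lambda>j. conv_pmf (if b then p else q) (conv_pmf (sum_iid_pmf j p) (sum_iid_pmf (N - j) q))))"
    unfolding mix_pmf_def conv_pmf_bind_left conv_pmf_bind_right by (rule bind_commute_pmf)
  also have "\<dots> = bind_pmf (bernoulli_pmf w) (\<lambda>b. bind_pmf (binomial_pmf N w)
      (\<lambda>j. conv_pmf (sum_iid_pmf ((if b then 1 else 0) + j) p)
                    (sum_iid_pmf (Suc N - ((if b then 1 else 0) + j)) q)))"
  proof (intro bind_pmf_cong refl)
    fix b j assume "j \<in> set_pmf (binomial_pmf N w)"
    then have "j \<le> N"
      using assms by (auto simp: set_pmf_binomial_eq split: if_splits)
    then show "conv_pmf (if b then p else q) (conv_pmf (sum_iid_pmf j p) (sum_iid_pmf (N - j) q)) =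
        conv_pmf (sum_iid_pmf ((if b then 1 else 0) + j) p)
                 (sum_iid_pmf (Suc N - ((if b then 1 else 0) + j)) q)"
      by (cases b) (simp_all add: sum_iid_pmf_Suc conv_pmf_assoc conv_pmf_left_commute Suc_diff_le)
  qed
  also have "\<dots> = bind_pmf (binomial_pmf (Suc N) w)
      (\<lambda>j. conv_pmf (sum_iid_pmf j p) (sum_iid_pmf (Suc N - j) q))"
    using assms by (simp add: binomial_pmf_Suc bind_assoc_pmf bind_return_pmf)
  finally show ?case .
qed

lemma poisson_binomial_thinning:
  assumes "0 < a" "0 < b"
  shows "bind_pmf (poisson_pmf (a + b)) (\<lambda>N. map_pmf (\<lambda>i. (i, N - i)) (binomial_pmf N (a / (a + b))))
     = pair_pmf (poisson_pmf a) (poisson_pmf b)"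
proof (rule pmf_eqI)
  fix x :: "nat \<times> nat"
  obtain j m where x: "x = (j, m)" by (cases x)
  define w where "w = a / (a + b)"
  have w: "0 \<le> w" "w \<le> 1" "1 - w = b / (a + b)"
    using assms by (auto simp: w_def field_simps)
  have split: "pmf (map_pmf (\<lambda>i. (i, N - i)) (binomial_pmf N w)) (j, m) =
      (if N = j + m then pmf (binomial_pmf N w) j else 0)" for N
  proof (cases "N = j + m")
    case True
    have "inj (\<lambda>i. (i, N - i))" by (auto simp: inj_def)
    from pmf_map_inj'[OF this, of "binomial_pmf N w" j] True show ?thesis by simp
  next
    case False
    then have "(j, m) \<notin> set_pmf (map_pmf (\<lambda>i. (i, N - i)) (binomial_pmf N w))"
      using w by (auto simp: set_pmf_binomial_eq split: if_splits)
    then show ?thesis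
      using False by (simp add: set_pmf_eq)
  qed
  have "pmf (bind_pmf (poisson_pmf (a + b)) (\<lambda>N. map_pmf (\<lambda>i. (i, N - i)) (binomial_pmf N w))) x
      = (\<integral>N. (if N = j + m then pmf (binomial_pmf N w) j else 0) \<partial>measure_pmf (poisson_pmf (a + b)))"
    unfolding pmf_bind x split ..
  also have "\<dots> = (\<Sum>N\<in>{j + m}.
      (if N = j + m then pmf (binomial_pmf N w) j else 0) * pmf (poisson_pmf (a + b)) N)"
    by (rule integral_measure_pmf_real) (auto split: if_splits)
  also have "\<dots> = real ((j + m) choose j) * w ^ j * (1 - w) ^ m * ((a + b) ^ (j + m) / fact (j + m) * exp (- (a + b)))"
    using w assms by simp
  also have "\<dots> = (fact (j + m) / (fact j * fact m)) * (a ^ j / (a + b) ^ j) * (b ^ m / (a + b) ^ m)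
      * ((a + b) ^ (j + m) / fact (j + m) * exp (- (a + b)))"
  proof -
    have "real ((j + m) choose j) = fact (j + m) / (fact j * fact m)"
      by (simp add: binomial_fact)
    then show ?thesis
      by (simp only: w(3)) (simp add: w_def power_divide)
  qed
  also have "\<dots> = a ^ j / fact j * exp (- a) * (b ^ m / fact m * exp (- b))"
    using assms by (simp add: power_add exp_add[symmetric] field_simps)
  also have "\<dots> = pmf (pair_pmf (poisson_pmf a) (poisson_pmf b)) x"
    using assms by (simp add: x pmf_pair)
  finally show "pmf (bind_pmf (poisson_pmf (a + b))
      (\<lambda>N. map_pmf (\<lambda>i. (i, N - i)) (binomial_pmf N (a / (a + b))))) x
      = pmf (pair_pmf (poisson_pmf a) (poisson_pmf b)) x"
    unfolding w_def .
qed

lemma conv_compound_poisson_pmf: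
  assumes "0 \<le> a" "0 \<le> b"
  shows "conv_pmf (compound_poisson_pmf a p) (compound_poisson_pmf b q) =
    compound_poisson_pmf (a + b) (mix_pmf (a / (a + b)) p q)"
proof -
  consider "a = 0" | "b = 0" | "0 < a" "0 < b"
    using assms by linarith
  then show ?thesis
  proof cases
    case 1
    then show ?thesis by (simp add: compound_poisson_pmf_nonpos)
  next
    case 2
    then show ?thesis by (cases "a = 0") (simp_all add: compound_poisson_pmf_nonpos)
  next
    case 3
    define w where "w = a / (a + b)"
    have w: "0 \<le> w" "w \<le> 1"
      using 3 by (auto simp: w_def field_simps)
    have "compound_poisson_pmf (a + b) (mix_pmf w p q) =
        bind_pmf (poisson_pmf (a + b)) (\<lambda>N. bind_pmf (binomial_pmf N w)
          (\<lambda>j. conv_pmf (sum_iid_pmf j p) (sum_iid_pmf (N - j) q)))"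
      using 3 w by (simp add: compound_poisson_pmf_def Po_def sum_iid_pmf_mix_pmf)
    also have "\<dots> = bind_pmf
        (bind_pmf (poisson_pmf (a + b)) (\<lambda>N. map_pmf (\<lambda>i. (i, N - i)) (binomial_pmf N w)))
        (\<lambda>(j, m). conv_pmf (sum_iid_pmf j p) (sum_iid_pmf m q))"
      by (simp add: bind_assoc_pmf bind_map_pmf)
    also have "\<dots> = bind_pmf (pair_pmf (poisson_pmf a) (poisson_pmf b))
        (\<lambda>(j, m). conv_pmf (sum_iid_pmf j p) (sum_iid_pmf m q))"
      unfolding w_def poisson_binomial_thinning[OF 3] ..
    also have "\<dots> = conv_pmf (compound_poisson_pmf a p) (compound_poisson_pmf b q)"
      using 3 by (simp add: pair_pmf_def compound_poisson_pmf_def Po_def bind_assoc_pmf bind_return_pmf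
          conv_pmf_bind_left conv_pmf_bind_right) (rule bind_commute_pmf)
    finally show ?thesis
      unfolding w_def ..
  qed
qed

lemma conv_compound_poisson_pmf_same:
  assumes "0 \<le> a" "0 \<le> b"
  shows "conv_pmf (compound_poisson_pmf a p) (compound_poisson_pmf b p) = compound_poisson_pmf (a + b) p"
  by (simp only: conv_compound_poisson_pmf[OF assms] mix_pmf_same)

lemma conv_compound_poisson_pmf_half:
  assumes "0 \<le> a"
  shows "conv_pmf (compound_poisson_pmf a p) (compound_poisson_pmf a q) =
    compound_poisson_pmf (2 * a) (mix_pmf (1 / 2) p q)"
proof (cases "a = 0")
  case True
  then show ?thesis by (simp add: compound_poisson_pmf_nonpos)
next
  case False
  then have "a / (a + a) = 1 / 2"
    by simp
  then show ?thesis
    using conv_compound_poisson_pmf[OF assms assms] by (simp only: mult_2)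
qed

definition sign_mixture :: "(bool \<Rightarrow> bool \<Rightarrow> 'a pmf) \<Rightarrow> 'a pmf" where
  "sign_mixture F =
     bind_pmf (bernoulli_pmf (1 / 2)) (\<lambda>a. bind_pmf (bernoulli_pmf (1 / 2)) (\<lambda>b. F a b))"

lemma map_sign_mixture: "map_pmf f (sign_mixture F) = sign_mixture (\<lambda>a b. map_pmf f (F a b))"
  by (simp add: sign_mixture_def map_bind_pmf)

lemma sign_mixture_eq_mix_pmf:
  "sign_mixture F = mix_pmf (1 / 2) (mix_pmf (1 / 2) (F True True) (F True False))
                                   (mix_pmf (1 / 2) (F False True) (F False False))"
  unfolding sign_mixture_def mix_pmf_def
proof (intro bind_pmf_cong refl)
  fix a :: bool
  show "bind_pmf (bernoulli_pmf (1 / 2)) (F a) =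
      (if a then bind_pmf (bernoulli_pmf (1 / 2)) (\<lambda>b. if b then F True True else F True False)
       else bind_pmf (bernoulli_pmf (1 / 2)) (\<lambda>b. if b then F False True else F False False))"
    by (cases a) (auto intro!: bind_pmf_cong)
qed

lemma foldr_conv_compound_poisson_signs:
  assumes "0 \<le> lam"
  shows "foldr conv_pmf (map (\<lambda>(a, b). compound_poisson_pmf lam (F a b)) signs) r =
    conv_pmf (compound_poisson_pmf (4 * lam) (sign_mixture F)) r"
proof -
  have "foldr conv_pmf (map (\<lambda>(a, b). compound_poisson_pmf lam (F a b)) signs) r =
      conv_pmf (conv_pmf
        (conv_pmf (compound_poisson_pmf lam (F True True)) (compound_poisson_pmf lam (F True False)))
        (conv_pmf (compound_poisson_pmf lam (F False True)) (compound_poisson_pmf lam (F False False)))) r"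
    by (simp add: signs_def conv_pmf_assoc)
  also have "\<dots> = conv_pmf (compound_poisson_pmf (2 * (2 * lam)) (sign_mixture F)) r"
    using assms by (simp add: conv_compound_poisson_pmf_half sign_mixture_eq_mix_pmf)
  finally show ?thesis
    by simp
qed

section \<open>Satisfying assignments of a tree formula\<close>

definition parent_sign :: "ntype \<times> bool \<times> bool \<times> mtree \<Rightarrow> bool" where
  "parent_sign x = fst (snd x)"

definition child_sign :: "ntype \<times> bool \<times> bool \<times> mtree \<Rightarrow> bool" where
  "child_sign x = fst (snd (snd x))"

definition subtree :: "ntype \<times> bool \<times> bool \<times> mtree \<Rightarrow> mtree" where
  "subtree x = snd (snd (snd x))"

lemma child_entry_collapse: "(fst x, parent_sign x, child_sign x, subtree x) = x"
  by (simp add: parent_sign_def child_sign_def subtree_def)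

lemma is_var_MNode:
  "is_var (MNode cs) p \<longleftrightarrow>
     p = [] \<or> (\<exists>i q. p = i # q \<and> i < length cs \<and> is_var (subtree (cs ! i)) q)"
  (is "?lhs \<longleftrightarrow> ?rhs")
proof
  show "?lhs \<Longrightarrow> ?rhs"
    by (cases rule: is_var.cases) (auto simp: subtree_def)
  show "?rhs \<Longrightarrow> ?lhs"
    by (auto intro: is_var.intros(1) is_var.intros(2)[OF _ child_entry_collapse[symmetric]])
qed

lemma clause_MNode:
  "clause (MNode cs) p j s s' \<longleftrightarrow>
     (p = [] \<and> j < length cs \<and> parent_sign (cs ! j) = s \<and> child_sign (cs ! j) = s') \<or>
     (\<exists>i q. p = i # q \<and> i < length cs \<and> clause (subtree (cs ! i)) q j s s')"
  (is "?lhs \<longleftrightarrow> ?rhs")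
proof
  show "?lhs \<Longrightarrow> ?rhs"
    by (cases rule: clause.cases) (auto simp: subtree_def parent_sign_def child_sign_def)
  show "?rhs \<Longrightarrow> ?lhs"
    by (auto intro: clause.intros[OF _ child_entry_collapse[symmetric]])
qed

lemma satisfies_MNode:
  "satisfies (MNode cs) \<sigma> \<longleftrightarrow>
     (\<forall>i<length cs. (\<sigma> [] = parent_sign (cs ! i) \<or> \<sigma> [i] = child_sign (cs ! i)) \<and>
        satisfies (subtree (cs ! i)) (\<lambda>q. \<sigma> (i # q)))"
proof (intro iffI allI impI conjI)
  fix i assume sat: "satisfies (MNode cs) \<sigma>" and i: "i < length cs"
  show "\<sigma> [] = parent_sign (cs ! i) \<or> \<sigma> [i] = child_sign (cs ! i)"
    using sat i unfolding satisfies_def by (auto simp: clause_MNode)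
  show "satisfies (subtree (cs ! i)) (\<lambda>q. \<sigma> (i # q))"
    unfolding satisfies_def
  proof (intro allI impI)
    fix q j s s' assume "clause (subtree (cs ! i)) q j s s'"
    then have "clause (MNode cs) (i # q) j s s'"
      using i by (auto simp: clause_MNode)
    then show "\<sigma> (i # q) = s \<or> \<sigma> (i # q @ [j]) = s'"
      using sat unfolding satisfies_def by fastforce
  qed
next
  assume "\<forall>i<length cs. (\<sigma> [] = parent_sign (cs ! i) \<or> \<sigma> [i] = child_sign (cs ! i)) \<and>
    satisfies (subtree (cs ! i)) (\<lambda>q. \<sigma> (i # q))"
  then have children:
      "\<And>i. i < length cs \<Longrightarrow> \<sigma> [] = parent_sign (cs ! i) \<or> \<sigma> [i] = child_sign (cs ! i)"
    and branches: "\<And>i. i < length cs \<Longrightarrow> satisfies (subtree (cs ! i)) (\<lambda>q. \<sigma> (i # q))"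
    by blast+
  show "satisfies (MNode cs) \<sigma>"
    unfolding satisfies_def
  proof (intro allI impI)
    fix p j s s' assume "clause (MNode cs) p j s s'"
    then consider "p = []" "j < length cs" "parent_sign (cs ! j) = s" "child_sign (cs ! j) = s'"
      | i q where "p = i # q" "i < length cs" "clause (subtree (cs ! i)) q j s s'"
      unfolding clause_MNode by blast
    then show "\<sigma> p = s \<or> \<sigma> (p @ [j]) = s'"
    proof cases
      case 1
      then show ?thesis using children by auto
    next
      case (2 i q)
      then show ?thesis using branches unfolding satisfies_def by auto
    qed
  qed
qed

lemma mtree_subtree_induct [case_names MNode]:
  assumes "\<And>cs. (\<And>i. i < length cs \<Longrightarrow> P (subtree (cs ! i))) \<Longrightarrow> P (MNode cs)"
  shows "P T"
proof (induction T)
  case (MNode cs)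
  then show ?case
    by (intro assms) (metis nth_mem snds.intros subtree_def)
qed

lemma finite_is_var: "finite {p. is_var T p}"
proof (induction T rule: mtree_subtree_induct)
  case (MNode cs)
  have "{p. is_var (MNode cs) p} =
      insert [] (\<Union>i<length cs. Cons i ` {q. is_var (subtree (cs ! i)) q})"
    unfolding is_var_MNode by auto
  then show ?case using MNode by simp
qed

lemma finite_SAT: "finite (SAT T)"
proof (rule finite_subset)
  show "SAT T \<subseteq> {p. is_var T p} \<rightarrow>\<^sub>E (UNIV :: bool set)"
    unfolding SAT_def by blast
  show "finite ({p. is_var T p} \<rightarrow>\<^sub>E (UNIV :: bool set))"
    by (rule finite_PiE) (simp_all add: finite_is_var)
qed

lemma SAT_MNode:
  "\<sigma> \<in> SAT (MNode cs) \<longleftrightarrow>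
     (\<forall>i<length cs. (\<lambda>q. \<sigma> (i # q)) \<in> SAT (subtree (cs ! i)) \<and>
        (\<sigma> [] = parent_sign (cs ! i) \<or> \<sigma> [i] = child_sign (cs ! i))) \<and>
     (\<forall>i q. length cs \<le> i \<longrightarrow> \<sigma> (i # q) = undefined)"
proof -
  have "(\<forall>p. \<not> is_var (MNode cs) p \<longrightarrow> \<sigma> p = undefined) \<longleftrightarrow>
      (\<forall>i<length cs. \<forall>q. \<not> is_var (subtree (cs ! i)) q \<longrightarrow> \<sigma> (i # q) = undefined) \<and>
      (\<forall>i q. length cs \<le> i \<longrightarrow> \<sigma> (i # q) = undefined)"
    by (auto simp: is_var_MNode neq_Nil_conv) (metis leI)+
  then show ?thesis
    unfolding SAT_def PiE_iff extensional_def satisfies_MNode by auto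
qed

definition root_count :: "mtree \<Rightarrow> bool \<Rightarrow> nat" where
  "root_count T x = card {\<sigma> \<in> SAT T. \<sigma> [] = x}"

lemma card_SAT_eq: "card (SAT T) = root_count T True + root_count T False"
proof -
  have "SAT T = {\<sigma> \<in> SAT T. \<sigma> [] = True} \<union> {\<sigma> \<in> SAT T. \<sigma> [] = False}"
    by auto
  then show ?thesis
    unfolding root_count_def
    by (metis (no_types, lifting) card_Un_disjoint disjoint_iff finite_Un finite_SAT mem_Collect_eq)
qed

lemma bij_betw_SAT_MNode_branches:
  "bij_betw (\<lambda>\<sigma>. \<lambda>i\<in>{..<length cs}. \<lambda>q. \<sigma> (i # q)) {\<sigma> \<in> SAT (MNode cs). \<sigma> [] = x}
     (PiE {..<length cs} (\<lambda>i. {\<tau> \<in> SAT (subtree (cs ! i)).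
        x = parent_sign (cs ! i) \<or> \<tau> [] = child_sign (cs ! i)}))"
proof -
  define n where "n = length cs"
  define A where
    "A i = {\<tau> \<in> SAT (subtree (cs ! i)). x = parent_sign (cs ! i) \<or> \<tau> [] = child_sign (cs ! i)}" for i
  define branches where "branches \<sigma> = (\<lambda>i\<in>{..<n}. \<lambda>q. \<sigma> (i # q))"
    for \<sigma> :: "nat list \<Rightarrow> bool"
  \<comment> \<open>assignments in \<open>SAT\<close> are \<open>undefined\<close> off the variables of the tree\<close>
  define graft where
    "graft f = (\<lambda>p. case p of [] \<Rightarrow> x | i # q \<Rightarrow> if i < n then f i q else undefined)"
    for f :: "nat \<Rightarrow> nat list \<Rightarrow> bool"
  have "bij_betw branches {\<sigma> \<in> SAT (MNode cs). \<sigma> [] = x} (PiE {..<n} A)"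
  proof (rule bij_betw_byWitness[where f' = graft])
    show "\<forall>\<sigma>\<in>{\<sigma> \<in> SAT (MNode cs). \<sigma> [] = x}. graft (branches \<sigma>) = \<sigma>"
    proof (intro ballI ext)
      fix \<sigma> p assume "\<sigma> \<in> {\<sigma> \<in> SAT (MNode cs). \<sigma> [] = x}"
      then show "graft (branches \<sigma>) p = \<sigma> p"
        by (cases p) (auto simp: SAT_MNode graft_def branches_def n_def not_less)
    qed
    show "\<forall>f\<in>PiE {..<n} A. branches (graft f) = f"
    proof (intro ballI, rule ext)
      fix f i assume f: "f \<in> PiE {..<n} A"
      show "branches (graft f) i = f i"
      proof (cases "i < n")
        case True
        then show ?thesis by (simp add: branches_def graft_def)
      next
        case False
        then show ?thesis using PiE_arb[OF f, of i] by (simp add: branches_def)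
      qed
    qed
    show "branches ` {\<sigma> \<in> SAT (MNode cs). \<sigma> [] = x} \<subseteq> PiE {..<n} A"
      by (auto simp: SAT_MNode branches_def restrict_PiE_iff A_def n_def)
    have "graft f \<in> SAT (MNode cs)" if f: "f \<in> PiE {..<n} A" for f
    proof -
      have "f i \<in> A i" if "i < n" for i
        using f that by blast
      then show ?thesis
        by (simp add: SAT_MNode graft_def A_def n_def)
    qed
    moreover have "graft f [] = x" for f
      by (simp add: graft_def)
    ultimately show "graft ` PiE {..<n} A \<subseteq> {\<sigma> \<in> SAT (MNode cs). \<sigma> [] = x}"
      by blast
  qed
  then show ?thesis
    unfolding branches_def n_def A_def .
qed

lemma root_count_MNode:
  "root_count (MNode cs) x =
     (\<Prod>i<length cs. if x = parent_sign (cs ! i) then card (SAT (subtree (cs ! i)))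
                       else root_count (subtree (cs ! i)) (child_sign (cs ! i)))"
proof -
  have "root_count (MNode cs) x = (\<Prod>i<length cs.
      card {\<tau> \<in> SAT (subtree (cs ! i)). x = parent_sign (cs ! i) \<or> \<tau> [] = child_sign (cs ! i)})"
    unfolding root_count_def by (simp add: bij_betw_same_card[OF bij_betw_SAT_MNode_branches] card_PiE)
  also have "\<dots> = (\<Prod>i<length cs. if x = parent_sign (cs ! i) then card (SAT (subtree (cs ! i)))
                       else root_count (subtree (cs ! i)) (child_sign (cs ! i)))"
    by (intro prod.cong) (auto simp: root_count_def)
  finally show ?thesis .
qed

lemma root_count_pos: "0 < root_count T x"
proof (induction T arbitrary: x rule: mtree_subtree_induct)
  case (MNode cs)
  then show ?case
    by (auto simp: root_count_MNode card_SAT_eq intro!: prod_pos)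
qed

definition sign_of_bool :: "bool \<Rightarrow> real" where
  "sign_of_bool b = (if b then 1 else -1)"

(* A clause with signs (a, b) to a child whose root has log-odds y is violated exactly when the
   root differs from a and the child from b.  The child agrees with b with probability
   (1 + sign b * tanh (y / 2)) / 2, so the clause shifts the log-odds of the root by
   -sign a times the logarithm of that probability. *)
fun log_odds :: "mtree \<Rightarrow> real" where
  "log_odds (MNode cs) = (\<Sum>(k, a, b, c)\<leftarrow>cs. LLterm (sign_of_bool (\<not> a)) (sign_of_bool b) (log_odds c))"

lemma log_odds_MNode:
  "log_odds (MNode cs) =
     (\<Sum>i<length cs. LLterm (sign_of_bool (\<not> parent_sign (cs ! i))) (sign_of_bool (child_sign (cs ! i)))
                              (log_odds (subtree (cs ! i))))"
proof -
  have "log_odds (MNode cs) =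
      (\<Sum>x\<leftarrow>cs. LLterm (sign_of_bool (\<not> parent_sign x)) (sign_of_bool (child_sign x))
                          (log_odds (subtree x)))"
    unfolding log_odds.simps
    by (intro arg_cong[where f = sum_list] map_cong)
       (auto simp: parent_sign_def child_sign_def subtree_def split: prod.splits)
  then show ?thesis
    by (simp add: sum_list_sum_nth atLeast0LessThan)
qed

lemma tanh_half_log_ratio:
  fixes u v y :: real
  assumes "0 < u" "0 < v" "exp y = u / v"
  shows "(1 + sign_of_bool b * tanh (y / 2)) / 2 = (if b then u else v) / (u + v)"
proof -
  have "exp (- 2 * (y / 2)) = v / u"
    using assms by (simp add: exp_minus)
  then have "tanh (y / 2) = (1 - v / u) / (1 + v / u)"
    by (simp only: tanh_real_altdef)
  also have "\<dots> = (u - v) / (u + v)"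
  proof -
    have "1 - v / u = (u - v) / u" "1 + v / u = (u + v) / u"
      using assms(1) by (simp_all add: field_simps)
    then show ?thesis
      using assms(1) by simp
  qed
  finally show ?thesis
    using assms(1,2) by (cases b) (simp_all add: sign_of_bool_def field_simps)
qed

lemma exp_log_odds: "exp (log_odds T) = root_count T True / root_count T False"
proof (induction T rule: mtree_subtree_induct)
  case (MNode cs)
  define factor where "factor i x = real
      (if x = parent_sign (cs ! i) then card (SAT (subtree (cs ! i)))
       else root_count (subtree (cs ! i)) (child_sign (cs ! i)))" for i x
  have "exp (LLterm (sign_of_bool (\<not> parent_sign (cs ! i))) (sign_of_bool (child_sign (cs ! i)))
             (log_odds (subtree (cs ! i)))) = factor i True / factor i False"
    if "i < length cs" for i
  proof -
    let ?c = "subtree (cs ! i)"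
    have "(1 + sign_of_bool (child_sign (cs ! i)) * tanh (log_odds ?c / 2)) / 2 =
        root_count ?c (child_sign (cs ! i)) / card (SAT ?c)"
      using tanh_half_log_ratio[OF _ _ MNode[OF that]] root_count_pos
      by (simp add: card_SAT_eq if_distrib)
    moreover have "0 < root_count ?c (child_sign (cs ! i))" "0 < card (SAT ?c)"
      by (simp_all add: root_count_pos card_SAT_eq)
    ultimately show ?thesis
      by (cases "parent_sign (cs ! i)") (simp_all add: LLterm_def factor_def sign_of_bool_def exp_minus)
  qed
  then have "exp (log_odds (MNode cs)) = (\<Prod>i<length cs. factor i True / factor i False)"
    unfolding log_odds_MNode by (simp add: exp_sum)
  also have "\<dots> = (\<Prod>i<length cs. factor i True) / (\<Prod>i<length cs. factor i False)"
    by (rule prod_dividef)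
  also have "\<dots> = root_count (MNode cs) True / root_count (MNode cs) False"
    by (simp add: root_count_MNode factor_def)
  finally show ?case .
qed

lemma mu_root_log_odds: "mu_root T = (1 + tanh (log_odds T / 2)) / 2"
proof -
  have "(1 + tanh (log_odds T / 2)) / 2 =
      root_count T True / (root_count T True + root_count T False)"
    using tanh_half_log_ratio[OF _ _ exp_log_odds, where b = True] root_count_pos[of T]
    by (simp only: sign_of_bool_def of_nat_0_less_iff of_nat_add if_True mult_1)
  moreover have "mu_root T = root_count T True / (root_count T True + root_count T False)"
    unfolding mu_root_def card_SAT_eq root_count_def[symmetric] by simp
  ultimately show ?thesis
    by (simp only:)
qed

section \<open>The operator LL\<close>

lemma sign_pmf_eq_map_bernoulli:
  "sign_pmf = map_pmf sign_of_bool (bernoulli_pmf (1 / 2))"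
  "sign_pmf = map_pmf (\<lambda>b. sign_of_bool (\<not> b)) (bernoulli_pmf (1 / 2))"
proof -
  have "map_pmf f (bernoulli_pmf (1 / 2)) = sign_pmf" if "f True \<noteq> f False" "{f True, f False} = {1, -1}" for f
  proof -
    have "map_pmf f (bernoulli_pmf (1 / 2)) = pmf_of_set (f ` UNIV)"
    proof (unfold bernoulli_pmf_half_conv_pmf_of_set, rule map_pmf_of_set_inj)
      show "inj_on f UNIV"
      proof (rule injI)
        fix x y assume "f x = f y"
        then show "x = y"
          using that(1) by (cases x; cases y) auto
      qed
    qed simp_all
    also have "f ` UNIV = {1, -1}"
      using that(2) by (auto simp: UNIV_bool)
    finally show ?thesis
      by (simp add: sign_pmf_def)
  qed
  then show "sign_pmf = map_pmf sign_of_bool (bernoulli_pmf (1 / 2))"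
    "sign_pmf = map_pmf (\<lambda>b. sign_of_bool (\<not> b)) (bernoulli_pmf (1 / 2))"
    by (simp_all add: sign_of_bool_def insert_commute)
qed

lemma LLunit_eq_sign_mixture:
  "LLunit \<rho> = sign_mixture (\<lambda>a b. map_pmf (\<lambda>\<xi>.
     (LLterm (sign_of_bool (\<not> a)) (sign_of_bool b) (fst \<xi>),
      LLterm (sign_of_bool (\<not> a)) (sign_of_bool b) (snd \<xi>))) \<rho>)"
proof -
  define u where "u a b \<xi> = (LLterm (sign_of_bool (\<not> a)) (sign_of_bool b) (fst \<xi>),
    LLterm (sign_of_bool (\<not> a)) (sign_of_bool b) (snd \<xi>))" for a b and \<xi> :: "real \<times> real"
  have "LLunit \<rho> = bind_pmf \<rho> (\<lambda>\<xi>. sign_mixture (\<lambda>a b. return_pmf (u a b \<xi>)))"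
    unfolding LLunit_def sign_mixture_def u_def
    by (subst (1) sign_pmf_eq_map_bernoulli(2), subst sign_pmf_eq_map_bernoulli(1)) (simp add: bind_map_pmf)
  also have "\<dots> = sign_mixture (\<lambda>a b. bind_pmf \<rho> (\<lambda>\<xi>. return_pmf (u a b \<xi>)))"
    unfolding sign_mixture_def
    by (subst bind_commute_pmf) (subst (2) bind_commute_pmf, rule refl)
  finally show ?thesis
    by (simp add: map_pmf_def u_def)
qed

lemma fst_sum_list: "fst (sum_list xs) = sum_list (map fst xs)"
  by (induction xs) simp_all

lemma snd_sum_list: "snd (sum_list xs) = sum_list (map snd xs)"
  by (induction xs) simp_all

lemma LL_eq_conv_pmf:
  "LL d t \<rho> = conv_pmf (compound_poisson_pmf (d * t) (LLunit \<rho>))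
     (conv_pmf (compound_poisson_pmf (d * (1 - t)) (map_pmf (\<lambda>z. (fst z, 0)) (LLunit \<rho>)))
               (compound_poisson_pmf (d * (1 - t)) (map_pmf (\<lambda>z. (0, snd z)) (LLunit \<rho>))))"
proof -
  define U where "U = LLunit \<rho>"
  have summands: "conv_pmf (sum_iid_pmf D U) (conv_pmf (sum_iid_pmf D' (map_pmf (\<lambda>z. (fst z, 0)) U))
        (sum_iid_pmf D'' (map_pmf (\<lambda>z. (0, snd z)) U))) =
      bind_pmf (replicate_pmf D U) (\<lambda>A. bind_pmf (replicate_pmf D' U) (\<lambda>B. bind_pmf (replicate_pmf D'' U)
        (\<lambda>C. return_pmf (sum_list (map fst A) + sum_list (map fst B),
                          sum_list (map snd A) + sum_list (map snd C)))))"
    for D D' D''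
  proof -
    have summands: "conv_pmf (sum_iid_pmf D U) (conv_pmf (sum_iid_pmf D' (map_pmf (\<lambda>z. (fst z, 0)) U))
        (sum_iid_pmf D'' (map_pmf (\<lambda>z. (0, snd z)) U))) =
      bind_pmf (replicate_pmf D U) (\<lambda>A. bind_pmf (replicate_pmf D' U) (\<lambda>B. map_pmf
        (\<lambda>C. sum_list A + (sum_list (map (\<lambda>z. (fst z, 0)) B) + sum_list (map (\<lambda>z. (0, snd z)) C)))
        (replicate_pmf D'' U)))"
      unfolding map_sum_list_replicate_pmf[symmetric] sum_iid_pmf_def[of D]
      by (simp add: conv_pmf_def map_bind_pmf bind_map_pmf map_pmf_comp)
    moreover have "sum_list A + (sum_list (map (\<lambda>z. (fst z, 0)) B) + sum_list (map (\<lambda>z. (0, snd z)) C)) =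
        (sum_list (map fst A) + sum_list (map fst B), sum_list (map snd A) + sum_list (map snd C))"
      for A B C :: "(real \<times> real) list"
      by (simp add: prod_eq_iff fst_sum_list snd_sum_list comp_def)
    ultimately show ?thesis
      by (simp only: map_pmf_def)
  qed
  have "conv_pmf (compound_poisson_pmf (d * t) U)
     (conv_pmf (compound_poisson_pmf (d * (1 - t)) (map_pmf (\<lambda>z. (fst z, 0)) U))
               (compound_poisson_pmf (d * (1 - t)) (map_pmf (\<lambda>z. (0, snd z)) U))) =
      bind_pmf (Po (d * t)) (\<lambda>D. bind_pmf (Po (d * (1 - t))) (\<lambda>D'.
        bind_pmf (Po (d * (1 - t))) (\<lambda>D''. conv_pmf (sum_iid_pmf D U)
          (conv_pmf (sum_iid_pmf D' (map_pmf (\<lambda>z. (fst z, 0)) U))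
                    (sum_iid_pmf D'' (map_pmf (\<lambda>z. (0, snd z)) U))))))"
    unfolding compound_poisson_pmf_def
    by (simp only: conv_pmf_bind_left) (simp only: conv_pmf_bind_right)
  also have "\<dots> = LL d t \<rho>"
    unfolding LL_def U_def[symmetric] summands by (simp only: mult.commute)
  finally show ?thesis
    unfolding U_def ..
qed

lemma map_LLunit_coordinate:
  assumes "\<pi> = fst \<or> \<pi> = snd"
  shows "map_pmf \<pi> (LLunit \<rho>) =
    sign_mixture (\<lambda>a b. map_pmf (LLterm (sign_of_bool (\<not> a)) (sign_of_bool b)) (map_pmf \<pi> \<rho>))"
  using assms by (auto simp: LLunit_eq_sign_mixture map_sign_mixture map_pmf_comp)

lemma map_LL_coordinate:
  assumes "\<pi> = fst \<or> \<pi> = snd" and "0 \<le> d" "0 \<le> t" "t \<le> 1"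
  shows "map_pmf \<pi> (LL d t \<rho>) = compound_poisson_pmf d (map_pmf \<pi> (LLunit \<rho>))"
proof -
  have additive: "Modules.additive \<pi>"
    using assms(1) by (auto intro: Modules.additive.intro)
  have "map_pmf \<pi> (LL d t \<rho>) =
      conv_pmf (compound_poisson_pmf (d * t) (map_pmf \<pi> (LLunit \<rho>)))
               (compound_poisson_pmf (d * (1 - t)) (map_pmf \<pi> (LLunit \<rho>)))"
    using assms(1) by (auto simp: LL_eq_conv_pmf map_conv_pmf[OF additive]
        map_compound_poisson_pmf[OF additive] map_pmf_comp map_pmf_const)
  also have "\<dots> = compound_poisson_pmf (d * t + d * (1 - t)) (map_pmf \<pi> (LLunit \<rho>))"
    using assms(2-4) by (intro conv_compound_poisson_pmf_same) simp_all
  finally show ?thesis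
    by (simp add: algebra_simps)
qed

section \<open>The law of the root log-odds\<close>

definition clause_message :: "nat \<Rightarrow> ntype \<times> bool \<times> bool \<times> mtree \<Rightarrow> real" where
  "clause_message h x = (if keep h (fst x)
     then LLterm (sign_of_bool (\<not> parent_sign x)) (sign_of_bool (child_sign x))
            (log_odds (restrict h (subtree x)))
     else 0)"

definition clause_messages :: "ntype \<times> bool \<times> bool \<times> mtree \<Rightarrow> real \<times> real" where
  "clause_messages x = (clause_message 1 x, clause_message 2 x)"

lemma log_odds_restrict_MNode: "log_odds (restrict h (MNode cs)) = sum_list (map (clause_message h) cs)"
  by (induction cs) (auto simp: clause_message_def parent_sign_def child_sign_def subtree_def)

lemma map_concat_pmfs:
  "map_pmf (\<lambda>cs. sum_list (map g cs)) (concat_pmfs ps) =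
     foldr conv_pmf (map (map_pmf (\<lambda>cs. sum_list (map g cs))) ps) (return_pmf 0)"
proof (induction ps)
  case (Cons p ps)
  have "map_pmf (\<lambda>cs. sum_list (map g cs)) (concat_pmfs (p # ps)) =
      conv_pmf (map_pmf (\<lambda>cs. sum_list (map g cs)) p) (map_pmf (\<lambda>cs. sum_list (map g cs)) (concat_pmfs ps))"
    by (simp add: conv_pmf_map_pmf map_bind_pmf map_pmf_comp flip: map_pmf_def)
  then show ?case
    using Cons.IH by simp
qed simp

lemma map_child_group:
  "map_pmf (\<lambda>cs. sum_list (map g cs)) (child_group lam k s s' p) =
     compound_poisson_pmf lam (map_pmf (\<lambda>c. g (k, s, s', c)) p)"
  unfolding child_group_def compound_poisson_pmf_def map_bind_pmf
  by (simp add: map_sum_list_replicate_pmf[symmetric] map_pmf_comp comp_def flip: map_pmf_def)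

lemma foldr_conv_child_groups:
  assumes "\<And>k lam. (k, lam) \<in> set xs \<Longrightarrow> 0 \<le> lam"
  shows "foldr conv_pmf (map (map_pmf (\<lambda>cs. sum_list (map g cs)))
      [child_group lam k s s' (P k). (k, lam) \<leftarrow> xs, (s, s') \<leftarrow> signs]) r =
    foldr (\<lambda>(k, lam). conv_pmf (compound_poisson_pmf (4 * lam)
      (sign_mixture (\<lambda>a b. map_pmf (\<lambda>c. g (k, a, b, c)) (P k))))) xs r"
  using assms
proof (induction xs)
  case (Cons x xs)
  let ?S = "map_pmf (\<lambda>cs. sum_list (map g cs))"
  let ?F = "\<lambda>(k, lam). conv_pmf (compound_poisson_pmf (4 * lam)
      (sign_mixture (\<lambda>a b. map_pmf (\<lambda>c. g (k, a, b, c)) (P k))))"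
  obtain k lam where x: "x = (k, lam)" by (cases x)
  then have "0 \<le> lam"
    using Cons.prems[of k lam] by simp
  have tail: "foldr conv_pmf
      (map ?S [child_group lam k s s' (P k). (k, lam) \<leftarrow> xs, (s, s') \<leftarrow> signs]) r = foldr ?F xs r"
    using Cons.prems by (intro Cons.IH) auto
  have head: "map ?S [child_group lam k s s' (P k). (s, s') \<leftarrow> signs] =
      map (\<lambda>(a, b). compound_poisson_pmf lam (map_pmf (\<lambda>c. g (k, a, b, c)) (P k))) signs"
    by (simp add: map_child_group case_prod_beta)
  have groups: "[child_group lam k s s' (P k). (k, lam) \<leftarrow> x # xs, (s, s') \<leftarrow> signs] =
      [child_group lam k s s' (P k). (s, s') \<leftarrow> signs] @
      [child_group lam k s s' (P k). (k, lam) \<leftarrow> xs, (s, s') \<leftarrow> signs]"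
    by (simp add: x)
  show ?case
    unfolding groups map_append foldr_append head tail
    by (simp add: x foldr_conv_compound_poisson_signs[OF \<open>0 \<le> lam\<close>])
qed simp

lemma offspring_rate_nonneg:
  assumes "0 \<le> d" "0 \<le> t" "t \<le> 1" "(k', lam) \<in> set (offspring d t k)"
  shows "0 \<le> lam"
proof -
  from assms(4) have "lam \<in> {d * t / 4, d * (1 - t) / 4, d / 4}"
    by (cases k) auto
  moreover have "0 \<le> d * t / 4" "0 \<le> d * (1 - t) / 4" "0 \<le> d / 4"
    using assms(1-3) by simp_all
  ultimately show ?thesis
    by blast
qed

lemma map_gen_Suc:
  assumes "\<And>cs. V (MNode cs) = sum_list (map g cs)" and "0 \<le> d" "0 \<le> t" "t \<le> 1"
  shows "map_pmf V (gen d t (Suc l) k) =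
    foldr (\<lambda>(k', lam). conv_pmf (compound_poisson_pmf (4 * lam)
      (sign_mixture (\<lambda>a b. map_pmf (\<lambda>c. g (k', a, b, c)) (gen d t l k')))))
      (offspring d t k) (return_pmf 0)"
proof -
  have "map_pmf V (gen d t (Suc l) k) = map_pmf (\<lambda>cs. sum_list (map g cs)) (concat_pmfs
      [child_group lam k' s s' (gen d t l k'). (k', lam) \<leftarrow> offspring d t k, (s, s') \<leftarrow> signs])"
    by (simp only: gen.simps map_pmf_comp o_def assms(1))
  then show ?thesis
    using offspring_rate_nonneg[OF assms(2-4)] by (simp only: map_concat_pmfs foldr_conv_child_groups)
qed

lemma map_log_odds_gen_distinct:
  assumes "offspring d t k = [(k, d / 4)]" "keep h k" "\<pi> = fst \<or> \<pi> = snd" "0 \<le> d" "0 \<le> t" "t \<le> 1"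
  shows "map_pmf (\<lambda>T. log_odds (restrict h T)) (gen d t l k) = map_pmf \<pi> (rho d t l)"
proof (induction l)
  case 0
  show ?case
    using assms(3) by auto
next
  case (Suc l)
  have messages: "map_pmf (\<lambda>c. clause_message h (k, a, b, c)) (gen d t l k) =
      map_pmf (LLterm (sign_of_bool (\<not> a)) (sign_of_bool b)) (map_pmf \<pi> (rho d t l))" for a b
    unfolding Suc.IH[symmetric] map_pmf_comp
    using assms(2) by (simp add: clause_message_def parent_sign_def child_sign_def subtree_def)
  have "map_pmf (\<lambda>T. log_odds (restrict h T)) (gen d t (Suc l) k) =
      compound_poisson_pmf d (sign_mixture (\<lambda>a b.
        map_pmf (LLterm (sign_of_bool (\<not> a)) (sign_of_bool b)) (map_pmf \<pi> (rho d t l))))"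
    unfolding map_gen_Suc[where V = "\<lambda>T. log_odds (restrict h T)", OF log_odds_restrict_MNode assms(4-6)]
    by (simp add: assms(1) messages)
  also have "\<dots> = map_pmf \<pi> (rho d t (Suc l))"
    using assms(3-6) by (simp add: map_LL_coordinate map_LLunit_coordinate)
  finally show ?case .
qed

lemma sign_mixture_clause_messages_distinct:
  assumes "0 \<le> d" "0 \<le> t" "t \<le> 1"
  shows "sign_mixture (\<lambda>a b. map_pmf (\<lambda>c. clause_messages (Dist1, a, b, c)) (gen d t l Dist1)) =
           map_pmf (\<lambda>z. (fst z, 0)) (LLunit (rho d t l))"
    and "sign_mixture (\<lambda>a b. map_pmf (\<lambda>c. clause_messages (Dist2, a, b, c)) (gen d t l Dist2)) =
           map_pmf (\<lambda>z. (0, snd z)) (LLunit (rho d t l))"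
proof -
  have "map_pmf (\<lambda>T. log_odds (restrict 1 T)) (gen d t l Dist1) = map_pmf fst (rho d t l)"
    and "map_pmf (\<lambda>T. log_odds (restrict 2 T)) (gen d t l Dist2) = map_pmf snd (rho d t l)"
    by (rule map_log_odds_gen_distinct; use assms in auto)+
  moreover have
    "map_pmf (\<lambda>c. clause_messages (Dist1, a, b, c)) (gen d t l Dist1) =
       map_pmf (\<lambda>x. (LLterm (sign_of_bool (\<not> a)) (sign_of_bool b) x, 0))
         (map_pmf (\<lambda>T. log_odds (restrict 1 T)) (gen d t l Dist1))"
    "map_pmf (\<lambda>c. clause_messages (Dist2, a, b, c)) (gen d t l Dist2) =
       map_pmf (\<lambda>x. (0, LLterm (sign_of_bool (\<not> a)) (sign_of_bool b) x))
         (map_pmf (\<lambda>T. log_odds (restrict 2 T)) (gen d t l Dist2))" for a b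
    by (simp_all add: map_pmf_comp clause_messages_def clause_message_def
        parent_sign_def child_sign_def subtree_def)
  ultimately show
    "sign_mixture (\<lambda>a b. map_pmf (\<lambda>c. clause_messages (Dist1, a, b, c)) (gen d t l Dist1)) =
       map_pmf (\<lambda>z. (fst z, 0)) (LLunit (rho d t l))"
    "sign_mixture (\<lambda>a b. map_pmf (\<lambda>c. clause_messages (Dist2, a, b, c)) (gen d t l Dist2)) =
       map_pmf (\<lambda>z. (0, snd z)) (LLunit (rho d t l))"
    unfolding LLunit_eq_sign_mixture map_sign_mixture by (simp_all add: map_pmf_comp)
qed

lemma sum_list_map_pair: "sum_list (map (\<lambda>x. (f x, g x)) xs) = (sum_list (map f xs), sum_list (map g xs))"
  by (simp add: prod_eq_iff fst_sum_list snd_sum_list comp_def)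

lemma map_log_odds_pair_gen_Shared:
  assumes "0 \<le> d" "0 \<le> t" "t \<le> 1"
  shows "map_pmf (\<lambda>T. (log_odds (restrict 1 T), log_odds (restrict 2 T))) (gen d t l Shared) = rho d t l"
proof (induction l)
  case 0
  show ?case by (simp add: zero_prod_def)
next
  case (Suc l)
  have shared:
    "sign_mixture (\<lambda>a b. map_pmf (\<lambda>c. clause_messages (Shared, a, b, c)) (gen d t l Shared)) =
       LLunit (rho d t l)"
    unfolding LLunit_eq_sign_mixture Suc.IH[symmetric] map_pmf_comp
    by (simp add: clause_messages_def clause_message_def parent_sign_def child_sign_def subtree_def)
  have pair_MNode: "(log_odds (restrict 1 (MNode cs)), log_odds (restrict 2 (MNode cs))) =
      sum_list (map clause_messages cs)" for cs
    unfolding clause_messages_def by (simp only: log_odds_restrict_MNode sum_list_map_pair)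
  have "map_pmf (\<lambda>T. (log_odds (restrict 1 T), log_odds (restrict 2 T))) (gen d t (Suc l) Shared) =
      conv_pmf (compound_poisson_pmf (d * t) (LLunit (rho d t l)))
        (conv_pmf (compound_poisson_pmf (d * (1 - t)) (map_pmf (\<lambda>z. (fst z, 0)) (LLunit (rho d t l))))
                  (compound_poisson_pmf (d * (1 - t)) (map_pmf (\<lambda>z. (0, snd z)) (LLunit (rho d t l)))))"
    unfolding map_gen_Suc[OF pair_MNode assms]
    by (simp add: shared sign_mixture_clause_messages_distinct[OF assms] del: One_nat_def)
  also have "\<dots> = rho d t (Suc l)"
    by (simp add: LL_eq_conv_pmf)
  finally show ?case .
qed

theorem proposition2p7:
  fixes d t :: real and l :: nat
  assumes "0 < d" and "d < 2" and "0 \<le> t" and "t \<le> 1"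
  shows "vec_mu d t l = map_pmf psi (rho d t l)"
proof -
  \<comment> \<open>the truncated trees are finite\<close>
  have "vec_mu d t l = map_pmf psi
      (map_pmf (\<lambda>T. (log_odds (restrict 1 T), log_odds (restrict 2 T))) (gen d t l Shared))"
    unfolding vec_mu_def Ttensor_def map_pmf_comp by (simp add: psi_def mu_root_log_odds)
  also have "\<dots> = map_pmf psi (rho d t l)"
    using assms by (subst map_log_odds_pair_gen_Shared) simp_all
  finally show ?thesis .
qed

end
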